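(* Let $a,b\in\mathbb R$, $a<b$, let $f_1,f_2:[a,b]\to[0,+\infty)$ and $g:(0,+\infty)\to\mathbb R$ be continuous, with $f_i>0$ on $(a,b)$ for $i=1,2$ and $g$ nondecreasing. Assume $\overline D^2f_1(x)\ge g(f_1(x))$ and $\underline D^2f_2(x)\le g(f_2(x))$ for every $x\in(a,b)$. Then: (1) if $f_1(a)=f_2(a)$ and $f_1(a')>f_2(a')$ for some $a'\in(a,b]$, then $f_1(x)>f_2(x)$ for every $x\in[a',b]$; (2) if $f_1(b)=f_2(b)$ and $f_1(b')>f_2(b')$ for some $b'\in[a,b)$, then $f_1(x)>f_2(x)$ for every $x\in[a,b']$; (3) if $f_1(a)=f_2(a)$ and $f_1(b)=f_2(b)$, then $f_2(x)\ge f_1(x)$ for every $x\in[a,b]$; moreover, if $f_2(x_0)=f_1(x_0)$ for some $x_0\in(a,b)$, then the right derivatives of $f_1,f_2$ at $x_0$ coincide and the left derivatives of $f_1,f_2$ at $x_0$ coincide (these one-sided derivatives exist).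
   Context: $\overline D^2f(x)=\limsup_{h\to0^+}\frac{f(x+h)+f(x-h)-2f(x)}{h^2}$ and $\underline D^2f(x)=\liminf_{h\to0^+}\frac{f(x+h)+f(x-h)-2f(x)}{h^2}$. *)

theory Defs
  imports "HOL-Analysis.Analysis"
begin

definition upper_D2 :: "(real \<Rightarrow> real) \<Rightarrow> real \<Rightarrow> ereal" where
  "upper_D2 f x = Limsup (at_right 0) (\<lambda>h. ereal ((f (x + h) + f (x - h) - 2 * f x) / h\<^sup>2))"

definition lower_D2 :: "(real \<Rightarrow> real) \<Rightarrow> real \<Rightarrow> ereal" where
  "lower_D2 f x = Liminf (at_right 0) (\<lambda>h. ereal ((f (x + h) + f (x - h) - 2 * f x) / h\<^sup>2))"

end

theory Submission
  imports Defs
begin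

(* If upper_D2 F >= c on an interval, then F - c x^2/2 is convex there: otherwise, subtracting a
   chord and adding a small multiple of (x - p)(x - q) produces an interior maximum at which every
   small symmetric second difference is negative. By continuity of g, near a point z with
   f1 z > f2 z this applies with c = g (f1 z) - e, so the second differences of f1 are bounded below
   for all small h, not merely along a sequence. At a maximum of f1 - f2 + e (x - p)(x - q) this
   bound transfers to f2 and, g being nondecreasing, gives lower_D2 f2 z >= g (f2 z) + e, which is
   impossible. Hence f1 <= f2 between any two points where they agree; (1) and (2) follow with the
   intermediate value theorem. The local semiconvexity of f1 and semiconcavity of f2 yield
   one-sided derivatives with left <= right for f1 and right <= left for f2, while f1 <= f2 with
   contact at x0 reverses both inequalities, so all four one-sided derivatives agree. *)

lemma upper_D2_le_if_second_difference_le: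
  fixes F :: "real \<Rightarrow> real"
  assumes "\<delta> > 0" and "\<And>h. 0 < h \<Longrightarrow> h < \<delta> \<Longrightarrow> F (x + h) + F (x - h) - 2 * F x \<le> C * h\<^sup>2"
  shows "upper_D2 F x \<le> ereal C"
proof -
  have "eventually (\<lambda>h. h \<in> {0<..<\<delta>}) (at_right 0)"
    using assms(1) by (intro eventually_at_right_real) simp
  then have "eventually (\<lambda>h. ereal ((F (x + h) + F (x - h) - 2 * F x) / h\<^sup>2) \<le> ereal C) (at_right 0)"
    by (rule eventually_mono) (use assms(2) in \<open>auto simp: pos_divide_le_eq\<close>)
  then show ?thesis unfolding upper_D2_def by (rule Limsup_bounded)
qed

lemma lower_D2_ge_if_second_difference_ge:
  fixes F :: "real \<Rightarrow> real"
  assumes "\<delta> > 0" and "\<And>h. 0 < h \<Longrightarrow> h < \<delta> \<Longrightarrow> F (x + h) + F (x - h) - 2 * F x \<ge> C * h\<^sup>2"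
  shows "lower_D2 F x \<ge> ereal C"
proof -
  have "eventually (\<lambda>h. h \<in> {0<..<\<delta>}) (at_right 0)"
    using assms(1) by (intro eventually_at_right_real) simp
  then have "eventually (\<lambda>h. ereal C \<le> ereal ((F (x + h) + F (x - h) - 2 * F x) / h\<^sup>2)) (at_right 0)"
    by (rule eventually_mono) (use assms(2) in \<open>auto simp: pos_le_divide_eq\<close>)
  then show ?thesis unfolding lower_D2_def by (rule Liminf_bounded)
qed

lemma second_difference_at_positive_max:
  fixes \<phi> :: "real \<Rightarrow> real"
  assumes cont: "continuous_on {p..q} \<phi>" and "\<phi> p \<le> 0" "\<phi> q \<le> 0"
    and py: "p < y" and yq: "y < q" and pos: "\<phi> y > 0"
  obtains z \<epsilon> where "p < z" "z < q" "\<epsilon> > 0" "\<phi> z > 0"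
    "\<And>t. 0 < t \<Longrightarrow> t \<le> z - p \<Longrightarrow> t \<le> q - z \<Longrightarrow>
      \<phi> (z + t) + \<phi> (z - t) - 2 * \<phi> z \<le> - 2 * \<epsilon> * t\<^sup>2"
proof -
  define \<epsilon> where "\<epsilon> = \<phi> y / (q - p)\<^sup>2"
  have \<epsilon>: "\<epsilon> > 0" using pos py yq by (simp add: \<epsilon>_def)
  define M where "M x = \<phi> x + \<epsilon> * (x - p) * (x - q)" for x
  have "continuous_on {p..q} M" unfolding M_def using cont by (intro continuous_intros)
  then obtain z where z: "z \<in> {p..q}" and max: "\<forall>x\<in>{p..q}. M x \<le> M z"
    using continuous_attains_sup[OF compact_Icc] py yq by (metis atLeastAtMost_iff empty_iff less_imp_le)
  have "(y - p) * (q - y) < (q - p)\<^sup>2"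
    using py yq by (simp add: power2_eq_square mult_strict_mono)
  then have "\<epsilon> * ((y - p) * (q - y)) < \<epsilon> * (q - p)\<^sup>2" using \<epsilon> by simp
  also have "\<dots> = \<phi> y" using py yq by (simp add: \<epsilon>_def)
  finally have "M y > 0" by (simp add: M_def algebra_simps)
  moreover have "M y \<le> M z" using max py yq by simp
  ultimately have Mz: "M z > 0" by linarith
  moreover have "M p \<le> 0" "M q \<le> 0" using assms by (simp_all add: M_def)
  ultimately have zp: "p < z" and zq: "z < q" using z by (auto simp: le_less)
  have "\<epsilon> * (z - p) * (z - q) < 0" using \<epsilon> zp zq by (simp add: mult_pos_neg)
  then have "\<phi> z > 0" using Mz by (simp add: M_def)
  moreover have "\<phi> (z + t) + \<phi> (z - t) - 2 * \<phi> z \<le> - 2 * \<epsilon> * t\<^sup>2"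
    if "0 < t" "t \<le> z - p" "t \<le> q - z" for t
  proof -
    have "M (z + t) \<le> M z" "M (z - t) \<le> M z" using max that by auto
    then have "M (z + t) + M (z - t) - 2 * M z \<le> 0" by simp
    then show ?thesis by (simp add: M_def power2_eq_square algebra_simps)
  qed
  ultimately show ?thesis using that zp zq \<epsilon> by blast
qed

lemma convex_on_minus_quadratic_if_upper_D2_ge:
  fixes F :: "real \<Rightarrow> real"
  assumes cont: "continuous_on {u..v} F" and D: "\<forall>x\<in>{u<..<v}. upper_D2 F x \<ge> ereal c"
  shows "convex_on {u..v} (\<lambda>x. F x - c / 2 * x\<^sup>2)"
proof (rule convex_on_linorderI)
  define K where "K s = F s - c / 2 * s\<^sup>2" for s
  fix t x y :: real
  assume t: "0 < t" "t < 1" and x: "x \<in> {u..v}" and y: "y \<in> {u..v}" and xy: "x < y"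
  define m where "m = (1 - t) *\<^sub>R x + t *\<^sub>R y"
  define \<sigma> where "\<sigma> = (K y - K x) / (y - x)"
  define L where "L s = K x + \<sigma> * (s - x)" for s
  define \<phi> where "\<phi> s = K s - L s" for s
  show "K m \<le> (1 - t) * K x + t * K y"
  proof (rule ccontr)
    assume "\<not> ?thesis"
    moreover have "L m = (1 - t) * K x + t * K y"
      using xy by (simp add: L_def m_def \<sigma>_def field_simps)
    ultimately have "\<phi> m > 0" by (simp add: \<phi>_def)
    moreover have "x < m" "m < y"
    proof -
      have "m = x + t * (y - x)" by (simp add: m_def algebra_simps)
      moreover have "0 < t * (y - x)" "t * (y - x) < 1 * (y - x)"
        using t xy by (simp_all add: mult_strict_right_mono)
      ultimately show "x < m" "m < y" by simp_all
    qed
    moreover have "\<phi> x = 0" "\<phi> y = 0" using xy by (simp_all add: \<phi>_def L_def \<sigma>_def)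
    moreover have "continuous_on {x..y} \<phi>"
      unfolding \<phi>_def K_def L_def using x y xy
      by (intro continuous_intros continuous_on_subset[OF cont]) auto
    ultimately obtain z \<epsilon> where z: "x < z" "z < y" and \<epsilon>: "\<epsilon> > 0" and
      diff: "\<And>h. 0 < h \<Longrightarrow> h \<le> z - x \<Longrightarrow> h \<le> y - z \<Longrightarrow>
        \<phi> (z + h) + \<phi> (z - h) - 2 * \<phi> z \<le> - 2 * \<epsilon> * h\<^sup>2"
      using second_difference_at_positive_max[of x y \<phi> m] by (metis order.refl)
    have "upper_D2 F z \<le> ereal (c - 2 * \<epsilon>)"
    proof (rule upper_D2_le_if_second_difference_le)
      show "min (z - x) (y - z) > 0" using z by simp
      fix h assume h: "0 < h" "h < min (z - x) (y - z)"
      have "L (z + h) + L (z - h) - 2 * L z = 0" by (simp add: L_def algebra_simps)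
      then have "F (z + h) + F (z - h) - 2 * F z - c * h\<^sup>2 = \<phi> (z + h) + \<phi> (z - h) - 2 * \<phi> z"
        by (simp add: \<phi>_def K_def power2_eq_square algebra_simps)
      also have "\<dots> \<le> - 2 * \<epsilon> * h\<^sup>2" using diff h by simp
      finally show "F (z + h) + F (z - h) - 2 * F z \<le> (c - 2 * \<epsilon>) * h\<^sup>2"
        by (simp add: algebra_simps)
    qed
    moreover have "upper_D2 F z \<ge> ereal c" using D x y z by auto
    ultimately have "ereal c \<le> ereal (c - 2 * \<epsilon>)" by (rule order_trans[rotated])
    then show False using \<epsilon> by simp
  qed
qed simp

lemma second_difference_ge_if_convex_minus_quadratic:
  fixes F :: "real \<Rightarrow> real"
  assumes conv: "convex_on {z - r..z + r} (\<lambda>x. F x - c / 2 * x\<^sup>2)" and t: "0 \<le> t" "t \<le> r"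
  shows "F (z + t) + F (z - t) - 2 * F z \<ge> c * t\<^sup>2"
proof -
  have mid: "(1 - 1 / 2) *\<^sub>R (z - t) + (1 / 2) *\<^sub>R (z + t) = z" by (simp add: field_simps)
  have "(\<lambda>x. F x - c / 2 * x\<^sup>2) ((1 - 1 / 2) *\<^sub>R (z - t) + (1 / 2) *\<^sub>R (z + t))
      \<le> (1 - 1 / 2) * (\<lambda>x. F x - c / 2 * x\<^sup>2) (z - t) + 1 / 2 * (\<lambda>x. F x - c / 2 * x\<^sup>2) (z + t)"
    by (rule convex_onD[OF conv]) (use t in auto)
  then show ?thesis unfolding mid by (simp add: power2_eq_square algebra_simps)
qed

lemma convex_on_slope_from_point_mono:
  fixes K :: "real \<Rightarrow> real"
  assumes conv: "convex_on I K" and "x \<in> I" "y \<in> I" "z \<in> I" "x < y" "x \<noteq> z" "y \<noteq> z"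
  shows "(K x - K z) / (x - z) \<le> (K y - K z) / (y - z)"
proof -
  have flip: "(K u - K v) / (u - v) = (K v - K u) / (v - u)" for u v
    by (metis minus_diff_eq minus_divide_divide)
  consider "x < y" "y < z" | "x < z" "z < y" | "z < x" "x < y"
    using assms by linarith
  then show ?thesis
  proof cases
    case 1
    then show ?thesis using convex_on_slope_le(2)[OF conv, of x z y] assms by simp
  next
    case 2
    then show ?thesis using convex_on_slope_le[OF conv, of x y z] assms flip[of z y] by simp
  next
    case 3
    then show ?thesis using convex_on_slope_le(1)[OF conv, of z y x] assms flip[of z x] flip[of z y] by simp
  qed
qed

lemma convex_on_one_sided_derivatives:
  fixes K :: "real \<Rightarrow> real"
  assumes conv: "convex_on {z - r..z + r} K" and r: "r > 0"
  obtains dr dl where "(K has_real_derivative dr) (at_right z)" "(K has_real_derivative dl) (at_left z)"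
    "dl \<le> dr"
proof -
  define S where "S y = (K y - K z) / (y - z)" for y
  have mono: "S x \<le> S y" if "z - r \<le> x" "x \<le> y" "y \<le> z + r" "x \<noteq> z" "y \<noteq> z" for x y
    using convex_on_slope_from_point_mono[OF conv, of x y z] that r
    by (cases "x = y") (auto simp: S_def)
  have "(S \<longlongrightarrow> Inf (S ` ({z<..} \<inter> {z<..z + r}))) (at z within ({z<..} \<inter> {z<..z + r}))"
    by (rule Lim_right_bound[where K = "S (z - r)"]) (use mono r in auto)
  moreover have "at z within ({z<..} \<inter> {z<..z + r}) = at_right z"
    by (rule at_within_nhd[of _ "{z - r<..<z + r}"]) (use r in auto)
  ultimately obtain dr where right: "(S \<longlongrightarrow> dr) (at_right z)" by auto
  have "(S \<longlongrightarrow> Sup (S ` ({..<z} \<inter> {z - r..<z}))) (at z within ({..<z} \<inter> {z - r..<z}))"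
    by (rule Lim_left_bound[where K = "S (z + r)"]) (use mono r in auto)
  moreover have "at z within ({..<z} \<inter> {z - r..<z}) = at_left z"
    by (rule at_within_nhd[of _ "{z - r<..<z + r}"]) (use r in auto)
  ultimately obtain dl where left: "(S \<longlongrightarrow> dl) (at_left z)" by auto
  have dl_le: "dl \<le> S y" if "z < y" "y \<le> z + r" for y
  proof (rule tendsto_upperbound[OF left])
    have "eventually (\<lambda>x. x \<in> {z - r<..<z}) (at_left z)"
      using r by (intro eventually_at_left_real) simp
    then show "eventually (\<lambda>x. S x \<le> S y) (at_left z)"
      by (rule eventually_mono) (use mono that in auto)
  qed simp
  have "dl \<le> dr"
  proof (rule tendsto_lowerbound[OF right])
    have "eventually (\<lambda>y. y \<in> {z<..<z + r}) (at_right z)"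
      using r by (intro eventually_at_right_real) simp
    then show "eventually (\<lambda>y. dl \<le> S y) (at_right z)"
      by (rule eventually_mono) (use dl_le in auto)
  qed simp
  moreover have "(K has_real_derivative dr) (at_right z)" "(K has_real_derivative dl) (at_left z)"
    using right left unfolding has_field_derivative_iff S_def by simp_all
  ultimately show ?thesis using that by blast
qed

lemma locally_convex_minus_quadratic_if_upper_D2_ge:
  fixes F G :: "real \<Rightarrow> real"
  assumes cont: "continuous_on {a..b} F" and D: "\<forall>x\<in>{a<..<b}. upper_D2 F x \<ge> ereal (G x)"
    and G: "isCont G z" and z: "z \<in> {a<..<b}" and c: "c < G z"
  obtains r where "r > 0" "convex_on {z - r..z + r} (\<lambda>x. F x - c / 2 * x\<^sup>2)"
proof -
  have "eventually (\<lambda>x. c < G x) (nhds z)"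
    using order_tendstoD(1)[OF G[unfolded isCont_def tendsto_at_iff_tendsto_nhds] c] .
  moreover have "eventually (\<lambda>x. x \<in> {a<..<b}) (nhds z)"
    using z by (intro eventually_nhds_in_open) auto
  ultimately have "eventually (\<lambda>x. c < G x \<and> x \<in> {a<..<b}) (nhds z)"
    by (rule eventually_conj)
  then obtain r where r: "r > 0" and near: "\<And>x. dist x z \<le> r \<Longrightarrow> c < G x \<and> x \<in> {a<..<b}"
    unfolding eventually_nhds_metric_le by blast
  have ends: "a < z - r" "z + r < b"
    using near[of "z - r"] near[of "z + r"] r by (auto simp: dist_real_def)
  have "convex_on {z - r..z + r} (\<lambda>x. F x - c / 2 * x\<^sup>2)"
  proof (rule convex_on_minus_quadratic_if_upper_D2_ge)
    show "continuous_on {z - r..z + r} F"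
      by (rule continuous_on_subset[OF cont]) (use ends in auto)
    show "\<forall>x\<in>{z - r<..<z + r}. ereal c \<le> upper_D2 F x"
    proof
      fix x assume x: "x \<in> {z - r<..<z + r}"
      then have "ereal c \<le> ereal (G x)" using near by (auto simp: dist_real_def less_imp_le)
      moreover have "ereal (G x) \<le> upper_D2 F x" using D ends x by auto
      ultimately show "ereal c \<le> upper_D2 F x" by (rule order_trans)
    qed
  qed
  then show ?thesis using that r by blast
qed

lemma one_sided_derivatives_if_upper_D2_ge:
  fixes F G :: "real \<Rightarrow> real"
  assumes "continuous_on {a..b} F" "\<forall>x\<in>{a<..<b}. upper_D2 F x \<ge> ereal (G x)"
    and "isCont G z" "z \<in> {a<..<b}"
  obtains dr dl where "(F has_real_derivative dr) (at_right z)" "(F has_real_derivative dl) (at_left z)"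
    "dl \<le> dr"
proof -
  define c where "c = G z - 1"
  obtain r where r: "r > 0" and conv: "convex_on {z - r..z + r} (\<lambda>x. F x - c / 2 * x\<^sup>2)"
    using locally_convex_minus_quadratic_if_upper_D2_ge[OF assms, of c] by (auto simp: c_def)
  obtain dr dl where
      "((\<lambda>x. F x - c / 2 * x\<^sup>2) has_real_derivative dr) (at_right z)"
      "((\<lambda>x. F x - c / 2 * x\<^sup>2) has_real_derivative dl) (at_left z)" "dl \<le> dr"
    by (rule convex_on_one_sided_derivatives[OF conv r])
  moreover have "((\<lambda>x. c / 2 * x\<^sup>2) has_real_derivative c * z) (at z within S)" for S
    by (auto intro!: derivative_eq_intros)
  ultimately have "(F has_real_derivative dr + c * z) (at_right z)"
    "(F has_real_derivative dl + c * z) (at_left z)"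
    using DERIV_add by fastforce+
  then show ?thesis using that \<open>dl \<le> dr\<close> by simp
qed

lemma upper_D2_uminus: "upper_D2 (\<lambda>x. - F x) x = - lower_D2 F x"
proof -
  have "(\<lambda>h. ereal ((- F (x + h) + - F (x - h) - 2 * - F x) / h\<^sup>2))
      = (\<lambda>h. - ereal ((F (x + h) + F (x - h) - 2 * F x) / h\<^sup>2))"
    by (auto simp: fun_eq_iff diff_divide_distrib add_divide_distrib)
  then show ?thesis by (simp only: upper_D2_def lower_D2_def ereal_Limsup_uminus)
qed

lemma one_sided_derivatives_if_lower_D2_le:
  fixes F G :: "real \<Rightarrow> real"
  assumes cont: "continuous_on {a..b} F" and D: "\<forall>x\<in>{a<..<b}. lower_D2 F x \<le> ereal (G x)"
    and G: "isCont G z" and z: "z \<in> {a<..<b}"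
  obtains dr dl where "(F has_real_derivative dr) (at_right z)" "(F has_real_derivative dl) (at_left z)"
    "dr \<le> dl"
proof -
  have "continuous_on {a..b} (\<lambda>x. - F x)" using cont by (rule continuous_on_minus)
  moreover have "\<forall>x\<in>{a<..<b}. upper_D2 (\<lambda>x. - F x) x \<ge> ereal (- G x)"
    using D by (metis upper_D2_uminus ereal_minus_le_minus uminus_ereal.simps(1))
  moreover have "isCont (\<lambda>x. - G x) z" using G by (rule isCont_minus)
  ultimately obtain dr dl where "((\<lambda>x. - F x) has_real_derivative dr) (at_right z)"
      "((\<lambda>x. - F x) has_real_derivative dl) (at_left z)" "dl \<le> dr"
    using z by (rule one_sided_derivatives_if_upper_D2_ge)
  then have "(F has_real_derivative - dr) (at_right z)" "(F has_real_derivative - dl) (at_left z)"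
    using DERIV_minus by fastforce+
  then show ?thesis using that \<open>dl \<le> dr\<close> by simp
qed

lemma isCont_comp_on_pos:
  fixes f g :: "real \<Rightarrow> real"
  assumes "continuous_on {a..b} f" "\<forall>x\<in>{a<..<b}. f x > 0" "continuous_on {0<..} g" "z \<in> {a<..<b}"
  shows "isCont (\<lambda>x. g (f x)) z"
proof -
  have "isCont f z" using continuous_on_interior[OF assms(1)] assms(4) by simp
  moreover have "f z \<in> {0<..}" using assms(2,4) by simp
  then have "isCont g (f z)"
    using assms(3) continuous_on_eq_continuous_at[OF open_greaterThan, of 0 g] by blast
  ultimately show ?thesis by (rule isCont_o2)
qed

lemma comparison_principle:
  fixes f1 f2 g :: "real \<Rightarrow> real"
  assumes f1c: "continuous_on {a..b} f1" and f2c: "continuous_on {a..b} f2"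
    and f1pos: "\<forall>x\<in>{a<..<b}. f1 x > 0" and f2pos: "\<forall>x\<in>{a<..<b}. f2 x > 0"
    and gc: "continuous_on {0<..} g" and gmono: "mono_on {0<..} g"
    and D1: "\<forall>x\<in>{a<..<b}. upper_D2 f1 x \<ge> ereal (g (f1 x))"
    and D2: "\<forall>x\<in>{a<..<b}. lower_D2 f2 x \<le> ereal (g (f2 x))"
    and ap: "a \<le> p" and py: "p \<le> y" and yq: "y \<le> q" and qb: "q \<le> b"
    and hp: "f1 p = f2 p" and hq: "f1 q = f2 q"
  shows "f1 y \<le> f2 y"
proof (rule ccontr)
  assume "\<not> f1 y \<le> f2 y"
  moreover from this have "p < y" "y < q" using py yq hp hq by (auto simp: le_less)
  moreover have "continuous_on {p..q} (\<lambda>x. f1 x - f2 x)"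
    using ap qb by (intro continuous_intros continuous_on_subset[OF f1c] continuous_on_subset[OF f2c]) auto
  ultimately obtain z \<epsilon> where z: "p < z" "z < q" and \<epsilon>: "\<epsilon> > 0" and above: "f1 z > f2 z" and
    diff: "\<And>t. 0 < t \<Longrightarrow> t \<le> z - p \<Longrightarrow> t \<le> q - z \<Longrightarrow>
      (f1 (z + t) - f2 (z + t)) + (f1 (z - t) - f2 (z - t)) - 2 * (f1 z - f2 z) \<le> - 2 * \<epsilon> * t\<^sup>2"
    using second_difference_at_positive_max[of p q "\<lambda>x. f1 x - f2 x" y] hp hq by auto
  have zab: "z \<in> {a<..<b}" using z ap qb by auto
  define c where "c = g (f1 z) - \<epsilon>"
  have "c < g (f1 z)" using \<epsilon> by (simp add: c_def)
  then obtain r where r: "r > 0" and conv: "convex_on {z - r..z + r} (\<lambda>x. f1 x - c / 2 * x\<^sup>2)"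
    by (rule locally_convex_minus_quadratic_if_upper_D2_ge[OF f1c D1 isCont_comp_on_pos[OF f1c f1pos gc zab] zab])
  have "g (f2 z) \<le> g (f1 z)"
    using above f1pos f2pos zab by (intro mono_onD[OF gmono]) auto
  have "ereal (g (f2 z) + \<epsilon>) \<le> lower_D2 f2 z"
  proof (rule lower_D2_ge_if_second_difference_ge)
    show "min r (min (z - p) (q - z)) > 0" using r z by simp
    fix t assume t: "0 < t" "t < min r (min (z - p) (q - z))"
    have "c * t\<^sup>2 \<le> f1 (z + t) + f1 (z - t) - 2 * f1 z"
      using second_difference_ge_if_convex_minus_quadratic[OF conv] t by simp
    with diff[of t] t have "(c + 2 * \<epsilon>) * t\<^sup>2 \<le> f2 (z + t) + f2 (z - t) - 2 * f2 z"
      by (simp add: algebra_simps)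
    moreover have "(g (f2 z) + \<epsilon>) * t\<^sup>2 \<le> (c + 2 * \<epsilon>) * t\<^sup>2"
      using \<open>g (f2 z) \<le> g (f1 z)\<close> by (intro mult_right_mono) (auto simp: c_def)
    ultimately show "(g (f2 z) + \<epsilon>) * t\<^sup>2 \<le> f2 (z + t) + f2 (z - t) - 2 * f2 z"
      by (rule order_trans[rotated])
  qed
  also have "\<dots> \<le> ereal (g (f2 z))" using D2 zab by auto
  finally show False using \<epsilon> by simp
qed

lemma pos_right_of_zero_if_nonpos_between_zeros:
  fixes \<phi> :: "real \<Rightarrow> real"
  assumes cont: "continuous_on {a..b} \<phi>"
    and between: "\<And>p q y. a \<le> p \<Longrightarrow> p \<le> y \<Longrightarrow> y \<le> q \<Longrightarrow> q \<le> b \<Longrightarrow>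
      \<phi> p = 0 \<Longrightarrow> \<phi> q = 0 \<Longrightarrow> \<phi> y \<le> 0"
    and "\<phi> a = 0" "a \<le> a'" "\<phi> a' > 0" "a' \<le> x" "x \<le> b"
  shows "\<phi> x > 0"
proof (rule ccontr)
  assume "\<not> \<phi> x > 0"
  moreover have "continuous_on {a'..x} \<phi>" using assms by (auto intro: continuous_on_subset[OF cont])
  ultimately obtain x1 where "a' \<le> x1" "x1 \<le> x" "\<phi> x1 = 0"
    using IVT2'[of \<phi> x 0 a'] assms by auto
  then have "\<phi> a' \<le> 0" using between[of a a' x1] assms by auto
  then show False using assms by simp
qed

lemma pos_left_of_zero_if_nonpos_between_zeros:
  fixes \<phi> :: "real \<Rightarrow> real"
  assumes cont: "continuous_on {a..b} \<phi>"
    and between: "\<And>p q y. a \<le> p \<Longrightarrow> p \<le> y \<Longrightarrow> y \<le> q \<Longrightarrow> q \<le> b \<Longrightarrow>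
      \<phi> p = 0 \<Longrightarrow> \<phi> q = 0 \<Longrightarrow> \<phi> y \<le> 0"
    and "\<phi> b = 0" "b' \<le> b" "\<phi> b' > 0" "a \<le> x" "x \<le> b'"
  shows "\<phi> x > 0"
proof (rule ccontr)
  assume "\<not> \<phi> x > 0"
  moreover have "continuous_on {x..b'} \<phi>" using assms by (auto intro: continuous_on_subset[OF cont])
  ultimately obtain x1 where "x \<le> x1" "x1 \<le> b'" "\<phi> x1 = 0"
    using IVT'[of \<phi> x 0 b'] assms by auto
  then have "\<phi> b' \<le> 0" using between[of x1 b' b] assms by auto
  then show False using assms by simp
qed

lemma one_sided_derivatives_eq_at_touching_point:
  fixes f1 f2 :: "real \<Rightarrow> real"
  assumes r1: "(f1 has_real_derivative dr1) (at_right z)" and l1: "(f1 has_real_derivative dl1) (at_left z)"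
    and r2: "(f2 has_real_derivative dr2) (at_right z)" and l2: "(f2 has_real_derivative dl2) (at_left z)"
    and "dl1 \<le> dr1" "dr2 \<le> dl2"
    and below: "eventually (\<lambda>x. f1 x \<le> f2 x) (at z)" and touch: "f1 z = f2 z"
  shows "dr1 = dr2 \<and> dl1 = dl2"
proof -
  have "eventually (\<lambda>x. f1 x \<le> f2 x) (at_right z)" "eventually (\<lambda>x. f1 x \<le> f2 x) (at_left z)"
    using below by (simp_all add: eventually_at_split)
  moreover have "eventually (\<lambda>x. z < x) (at_right z)" "eventually (\<lambda>x. x < z) (at_left z)"
    by (simp_all add: eventually_at_filter)
  ultimately have right: "eventually (\<lambda>x. ((f1 x - f2 x) - (f1 z - f2 z)) / (x - z) \<le> 0) (at_right z)"
    and left: "eventually (\<lambda>x. 0 \<le> ((f1 x - f2 x) - (f1 z - f2 z)) / (x - z)) (at_left z)"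
    using touch by (auto elim: eventually_elim2 simp: divide_nonpos_pos divide_nonpos_neg)
  have "dr1 - dr2 \<le> 0"
    using DERIV_diff[OF r1 r2] unfolding has_field_derivative_iff
    by (rule tendsto_upperbound[OF _ right]) simp
  moreover have "0 \<le> dl1 - dl2"
    using DERIV_diff[OF l1 l2] unfolding has_field_derivative_iff
    by (rule tendsto_lowerbound[OF _ left]) simp
  ultimately show ?thesis using assms by linarith
qed

theorem propositionA4:
  fixes a b :: real and f1 f2 g :: "real \<Rightarrow> real"
  assumes ab: "a < b"
    and f1c: "continuous_on {a..b} f1" and f2c: "continuous_on {a..b} f2"
    and f1nn: "\<forall>x\<in>{a..b}. f1 x \<ge> 0" and f2nn: "\<forall>x\<in>{a..b}. f2 x \<ge> 0"
    and f1pos: "\<forall>x\<in>{a<..<b}. f1 x > 0" and f2pos: "\<forall>x\<in>{a<..<b}. f2 x > 0"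
    and gc: "continuous_on {0<..} g" and gmono: "mono_on {0<..} g"
    and D1: "\<forall>x\<in>{a<..<b}. upper_D2 f1 x \<ge> ereal (g (f1 x))"
    and D2: "\<forall>x\<in>{a<..<b}. lower_D2 f2 x \<le> ereal (g (f2 x))"
  shows "(\<forall>a'\<in>{a<..b}. f1 a = f2 a \<and> f1 a' > f2 a' \<longrightarrow> (\<forall>x\<in>{a'..b}. f1 x > f2 x))
       \<and> (\<forall>b'\<in>{a..<b}. f1 b = f2 b \<and> f1 b' > f2 b' \<longrightarrow> (\<forall>x\<in>{a..b'}. f1 x > f2 x))
       \<and> (f1 a = f2 a \<and> f1 b = f2 b \<longrightarrow>
            (\<forall>x\<in>{a..b}. f2 x \<ge> f1 x) \<and>
            (\<forall>x0\<in>{a<..<b}. f2 x0 = f1 x0 \<longrightarrow>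
               (\<exists>dr dl. (f1 has_real_derivative dr) (at_right x0) \<and> (f2 has_real_derivative dr) (at_right x0)
                      \<and> (f1 has_real_derivative dl) (at_left x0) \<and> (f2 has_real_derivative dl) (at_left x0))))"
proof (intro conjI ballI impI)
  have cont: "continuous_on {a..b} (\<lambda>x. f1 x - f2 x)" using f1c f2c by (intro continuous_intros)
  have between: "\<And>p q y. a \<le> p \<Longrightarrow> p \<le> y \<Longrightarrow> y \<le> q \<Longrightarrow> q \<le> b \<Longrightarrow>
      f1 p - f2 p = 0 \<Longrightarrow> f1 q - f2 q = 0 \<Longrightarrow> f1 y - f2 y \<le> 0"
    using comparison_principle[OF f1c f2c f1pos f2pos gc gmono D1 D2] by simp
  show "f1 x > f2 x" if "a' \<in> {a<..b}" "f1 a = f2 a \<and> f1 a' > f2 a'" "x \<in> {a'..b}" for a' x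
    using pos_right_of_zero_if_nonpos_between_zeros[OF cont between, where a' = a' and x = x] that by auto
  show "f1 x > f2 x" if "b' \<in> {a..<b}" "f1 b = f2 b \<and> f1 b' > f2 b'" "x \<in> {a..b'}" for b' x
    using pos_left_of_zero_if_nonpos_between_zeros[OF cont between, where b' = b' and x = x] that by auto
  assume "f1 a = f2 a \<and> f1 b = f2 b"
  then have le: "f1 x \<le> f2 x" if "x \<in> {a..b}" for x
    using between[of a x b] that by auto
  then show "f2 x \<ge> f1 x" if "x \<in> {a..b}" for x using that .
  fix x0 assume x0: "x0 \<in> {a<..<b}" and touch: "f2 x0 = f1 x0"
  obtain dr1 dl1 where d1: "(f1 has_real_derivative dr1) (at_right x0)"
      "(f1 has_real_derivative dl1) (at_left x0)" "dl1 \<le> dr1"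
    using one_sided_derivatives_if_upper_D2_ge[OF f1c D1 isCont_comp_on_pos[OF f1c f1pos gc x0] x0] .
  obtain dr2 dl2 where d2: "(f2 has_real_derivative dr2) (at_right x0)"
      "(f2 has_real_derivative dl2) (at_left x0)" "dr2 \<le> dl2"
    using one_sided_derivatives_if_lower_D2_le[OF f2c D2 isCont_comp_on_pos[OF f2c f2pos gc x0] x0] .
  have "eventually (\<lambda>x. x \<in> {a<..<b}) (at x0)" using x0 by (intro eventually_at_in_open') auto
  then have "eventually (\<lambda>x. f1 x \<le> f2 x) (at x0)" by (rule eventually_mono) (auto intro: le)
  then have "dr1 = dr2 \<and> dl1 = dl2"
    using one_sided_derivatives_eq_at_touching_point[OF d1(1,2) d2(1,2) d1(3) d2(3)] touch by simp
  then show "\<exists>dr dl. (f1 has_real_derivative dr) (at_right x0) \<and> (f2 has_real_derivative dr) (at_right x0)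
      \<and> (f1 has_real_derivative dl) (at_left x0) \<and> (f2 has_real_derivative dl) (at_left x0)"
    using d1 d2 by blast
qed

end
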